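(* Let $T>0$ and let $\lambda:[0,T]\times\mathbb{R}\to\mathbb{R}$ be a continuous function such that (i) $y\mapsto\sup_{t\in[0,T]}|\lambda(t,y)|$ belongs to $L^1(\mathbb{R})$, and (ii) the partial derivative $\lambda_t$ exists, is continuous, and $y\mapsto\sup_{t\in[0,T]}|\lambda_t(t,y)|$ belongs to $L^1(\mathbb{R})$. Then the function $$\phi(t,y)\triangleq\int_0^y\exp\Big(2\int_0^s\lambda(t,r)\,dr\Big)ds,\qquad(t,y)\in[0,T]\times\mathbb{R},$$ satisfies $\phi_{yy}(t,y)-2\lambda(t,y)\phi_y(t,y)=0$, and has the following properties: 1. For every $t\in[0,T]$, $\phi(t,\cdot)$ is a one-to-one function from $\mathbb{R}$ onto $\mathbb{R}$, both $\phi(t,\cdot)$ and its inverse $\phi^{-1}(t,\cdot)$ are smooth, and they are globally Lipschitz in $y$: there is a constant $L$ such that $|\phi(t,y)-\phi(t,\bar y)|\le L|y-\bar y|$ and $|\phi^{-1}(t,y)-\phi^{-1}(t,\bar y)|\le L|y-\bar y|$ for all $t\in[0,T]$, $y,\bar y\in\mathbb{R}$. 2. $\phi_y$ is a positive bounded function, and $\phi_t$ is continuous in $t$ and Lipschitz continuous in $y$.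
   Context: Subscripts denote partial derivatives: $\phi_t,\phi_y,\phi_{yy}$, $\lambda_t$. *)

theory Defs
  imports "HOL-Analysis.Analysis"
begin

definition oint :: "real \<Rightarrow> real \<Rightarrow> (real \<Rightarrow> real) \<Rightarrow> real" where
  "oint a b f = (if a \<le> b then integral {a..b} f else - integral {b..a} f)"

definition phi :: "(real \<Rightarrow> real \<Rightarrow> real) \<Rightarrow> real \<Rightarrow> real \<Rightarrow> real" where
  "phi lam t y = oint 0 y (\<lambda>s. exp (2 * oint 0 s (\<lambda>r. lam t r)))"

definition C2 :: "(real \<Rightarrow> real) \<Rightarrow> bool" where
  "C2 f \<longleftrightarrow> (\<forall>y. f differentiable at y) \<and> (\<forall>y. deriv f differentiable at y)
            \<and> continuous_on UNIV (deriv (deriv f))"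

end

theory Submission
  imports Defs
begin

text \<open>Write \<Lambda>(t,y) for the integral of \<lambda>(t,.) over [0,y]. Then \<phi>_y = exp (2\<Lambda>),
  hence \<phi>_yy = 2\<lambda>\<phi>_y. Hypothesis (i) bounds |\<Lambda>| uniformly by the L1 norm C of
  sup_t |\<lambda>(t,.)|, so exp (-2C) \<le> \<phi>_y \<le> exp (2C): every \<phi>(t,.) is bi-Lipschitz, hence a
  bijection of the line with Lipschitz inverse, and the inverse is C2 by the inverse function
  rule. Differentiating under both integral signs gives \<phi>_t(t,y) as the integral of
  2\<Lambda>_t exp (2\<Lambda>) over [0,y], which is continuous in t; hypothesis (ii) bounds \<Lambda>_t in
  the same way, so \<phi>_t has a bounded y-derivative.\<close>

lemma continuous_on_section_fst:
  assumes "continuous_on (U \<times> V) (\<lambda>(t, y). g t y)" "t \<in> U"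
  shows "continuous_on V (g t)"
  using continuous_on_o_Pair[OF assms] by (simp add: o_def)

lemma continuous_on_section_snd:
  assumes "continuous_on (U \<times> V) (\<lambda>(t, y). g t y)" "y \<in> V"
  shows "continuous_on U (\<lambda>t. g t y)"
  by (rule continuous_on_compose2[OF assms(1), of U "\<lambda>t. (t, y)", simplified])
    (use assms(2) in \<open>auto intro!: continuous_intros\<close>)

lemma oint_combine:
  assumes "\<And>a b. f integrable_on {a..b}"
  shows "oint a b f + oint b c f = oint a c f"
proof -
  have combine: "integral {x..y} f + integral {y..z} f = integral {x..z} f"
    if "x \<le> y" "y \<le> z" for x y z
    by (rule Henstock_Kurzweil_Integration.integral_combine[OF that assms])
  show ?thesis
    unfolding oint_def
    using combine[of a b c] combine[of a c b] combine[of b a c] combine[of b c a]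
      combine[of c a b] combine[of c b a]
    by (auto split: if_splits)
qed

lemma integrable_on_interval_if_continuous:
  fixes f :: "real \<Rightarrow> real"
  shows "continuous_on UNIV f \<Longrightarrow> f integrable_on {a..b}"
  by (rule integrable_continuous_interval) (auto intro: continuous_on_subset)

lemma has_real_derivative_oint:
  assumes "continuous_on UNIV f"
  shows "((\<lambda>y. oint c y f) has_real_derivative f y) (at y)"
proof -
  define a b where "a = y - 1" and "b = y + 1"
  note integrable = integrable_on_interval_if_continuous[OF assms]
  have "((\<lambda>x. integral {a..x} f) has_real_derivative f y) (at y within {a..b})"
    by (rule integral_has_real_derivative)
      (auto simp: a_def b_def intro: continuous_on_subset[OF assms])
  then have "((\<lambda>x. integral {a..x} f) has_real_derivative f y) (at y)"
    using at_within_Icc_at[of a y b] by (simp add: a_def b_def)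
  then have "((\<lambda>x. oint c a f + integral {a..x} f) has_real_derivative f y) (at y)"
    using DERIV_add[OF DERIV_const] by fastforce
  then show ?thesis
  proof (rule has_field_derivative_transform_within_open[where S = "{a<..<b}"])
    fix x assume "x \<in> {a<..<b}"
    then have "oint a x f = integral {a..x} f" by (simp add: oint_def)
    then show "oint c a f + integral {a..x} f = oint c x f"
      using oint_combine[OF integrable, of c a x] by simp
  qed (auto simp: a_def b_def)
qed

lemma continuous_on_oint:
  assumes "continuous_on UNIV f"
  shows "continuous_on UNIV (\<lambda>y. oint c y f)"
  using DERIV_isCont[OF has_real_derivative_oint[OF assms]]
  by (simp add: continuous_on_eq_continuous_at)

lemma abs_oint_le:
  assumes "continuous_on UNIV f" "\<And>x. \<bar>f x\<bar> \<le> B"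
  shows "\<bar>oint a b f\<bar> \<le> B * \<bar>b - a\<bar>"
proof -
  have "\<bar>integral {x..y} f\<bar> \<le> B * (y - x)" if "x \<le> y" for x y
  proof -
    have "norm (integral {x..y} f) \<le> integral {x..y} (\<lambda>_. B)"
      by (rule integral_norm_bound_integral)
        (use integrable_on_interval_if_continuous[OF assms(1)] assms(2) in auto)
    then show ?thesis using that by (simp add: mult.commute)
  qed
  from this[of a b] this[of b a] show ?thesis
    unfolding oint_def by (auto simp: abs_minus_commute)
qed

lemma oint_ge:
  assumes "continuous_on UNIV f" "\<And>x. m \<le> f x" "a \<le> b"
  shows "m * (b - a) \<le> oint a b f"
proof -
  have "integral {a..b} (\<lambda>_. m) \<le> integral {a..b} f"
    by (rule integral_le) (use integrable_on_interval_if_continuous[OF assms(1)] assms in auto)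
  then show ?thesis using assms(3) by (simp add: oint_def mult.commute)
qed

lemma abs_oint_le_integral:
  assumes "continuous_on UNIV f" "integrable lborel M" "\<And>x. \<bar>f x\<bar> \<le> M x"
  shows "\<bar>oint a b f\<bar> \<le> integral UNIV M"
proof -
  have M_integrable: "M integrable_on UNIV"
    using integrable_on_lborel[OF assms(2)] .
  then have M_integrable_interval: "M integrable_on {x..y}" for x y
    by (rule integrable_on_subinterval) auto
  have M_nonneg: "0 \<le> M x" for x
    using assms(3) by (meson abs_ge_zero order_trans)
  have "\<bar>integral {x..y} f\<bar> \<le> integral UNIV M" for x y
  proof -
    have "norm (integral {x..y} f) \<le> integral {x..y} M"
      by (rule integral_norm_bound_integral)
        (use integrable_on_interval_if_continuous[OF assms(1)] M_integrable_interval assms(3) in auto)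
    also have "\<dots> \<le> integral UNIV M"
      by (rule integral_subset_le) (use M_integrable_interval M_integrable M_nonneg in auto)
    finally show ?thesis by simp
  qed
  from this[of a b] this[of b a] show ?thesis unfolding oint_def by auto
qed

lemma oint_rescale:
  assumes "continuous_on UNIV f"
  shows "oint 0 s f = integral {0..1} (\<lambda>u. s * f (s * u))"
proof -
  have "((\<lambda>u. s * f (s * u)) has_integral (oint 0 (s * 1) f - oint 0 (s * 0) f)) {0..1}"
  proof (rule fundamental_theorem_of_calculus)
    fix x :: real
    have "((\<lambda>u. oint 0 (s * u) f) has_real_derivative f (s * x) * s) (at x)"
      using DERIV_chain2[OF has_real_derivative_oint[OF assms], of "\<lambda>u. s * u" s x]
      by (metis DERIV_cmult_Id)
    then show "((\<lambda>u. oint 0 (s * u) f) has_vector_derivative s * f (s * x)) (at x within {0..1})"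
      by (simp add: has_real_derivative_iff_has_vector_derivative[symmetric] mult.commute
          has_field_derivative_at_within)
  qed simp
  then show ?thesis
    by (intro integral_unique[symmetric]) (simp add: oint_def)
qed

text \<open>Rescaling to the fixed interval [0,1] turns the variable upper limit into a parameter
  of the integrand, so continuity of parametric integrals applies.\<close>
lemma continuous_on_oint_param:
  fixes g :: "'a::topological_space \<Rightarrow> real \<Rightarrow> real"
  assumes g: "continuous_on (U \<times> UNIV) (\<lambda>(t, y). g t y)"
  shows "continuous_on (U \<times> UNIV) (\<lambda>(t, s). oint 0 s (g t))"
proof -
  have "continuous_on ((U \<times> UNIV) \<times> cbox 0 1)
      (\<lambda>p. (\<lambda>(t, y). g t y) (fst (fst p), snd (fst p) * snd p))"
    by (rule continuous_on_compose2[OF g]) (auto intro!: continuous_intros)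
  then have "continuous_on ((U \<times> UNIV) \<times> cbox 0 1) (\<lambda>((t, s), u). s * g t (s * u))"
    by (auto simp: split_beta intro!: continuous_intros)
  from integral_continuous_on_param[OF this]
  have "continuous_on (U \<times> UNIV) (\<lambda>(t, s). integral {0..1} (\<lambda>u. s * g t (s * u)))"
    by (simp add: split_beta)
  then show ?thesis
    by (rule continuous_on_cong[THEN iffD1, rotated 2])
      (auto simp: oint_rescale[OF continuous_on_section_fst[OF g]])
qed

lemma has_real_derivative_oint_param:
  fixes f f' :: "real \<Rightarrow> real \<Rightarrow> real"
  assumes "convex U"
    and f': "\<And>t r. t \<in> U \<Longrightarrow> ((\<lambda>t. f t r) has_real_derivative f' t r) (at t within U)"
    and f: "continuous_on (U \<times> UNIV) (\<lambda>(t, r). f t r)"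
    and f'_cont: "continuous_on (U \<times> UNIV) (\<lambda>(t, r). f' t r)"
    and "t \<in> U"
  shows "((\<lambda>t. oint 0 s (f t)) has_real_derivative oint 0 s (f' t)) (at t within U)"
proof -
  have leibniz: "((\<lambda>t. integral {a..b} (f t)) has_real_derivative integral {a..b} (f' t))
      (at t within U)" for a b
    unfolding cbox_interval[symmetric]
  proof (rule leibniz_rule_field_derivative[OF f' _ _ assms(5,1)])
    show "f t integrable_on cbox a b" if "t \<in> U" for t
      using integrable_on_interval_if_continuous[OF continuous_on_section_fst[OF f that]]
      by (simp add: cbox_interval)
    show "continuous_on (U \<times> cbox a b) (\<lambda>(t, r). f' t r)"
      by (rule continuous_on_subset[OF f'_cont]) auto
  qed auto
  show ?thesis
    using leibniz[of 0 s] DERIV_minus[OF leibniz[of s 0]] by (simp add: oint_def)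
qed

lemma abs_oint_le_integral_SUP:
  fixes f :: "real \<Rightarrow> real \<Rightarrow> real"
  assumes f: "continuous_on (U \<times> UNIV) (\<lambda>(t, y). f t y)"
    and "compact U" "integrable lborel (\<lambda>y. SUP t\<in>U. \<bar>f t y\<bar>)" "t \<in> U"
  shows "\<bar>oint a b (f t)\<bar> \<le> integral UNIV (\<lambda>y. SUP t\<in>U. \<bar>f t y\<bar>)"
proof (rule abs_oint_le_integral[OF continuous_on_section_fst[OF f assms(4)] assms(3)])
  fix y
  have "compact ((\<lambda>t. \<bar>f t y\<bar>) ` U)"
    using continuous_on_section_snd[OF f] assms(2)
    by (intro compact_continuous_image continuous_intros) auto
  then show "\<bar>f t y\<bar> \<le> (SUP t\<in>U. \<bar>f t y\<bar>)"
    by (intro cSUP_upper assms(4) bounded_imp_bdd_above compact_imp_bounded)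
qed

lemma C2I:
  assumes "\<And>y. (f has_real_derivative f' y) (at y)" "\<And>y. (f' has_real_derivative f'' y) (at y)"
    and "continuous_on UNIV f''"
  shows "C2 f"
proof -
  have "deriv f = f'" "deriv f' = f''"
    using assms(1,2) DERIV_imp_deriv by blast+
  then show ?thesis
    unfolding C2_def using assms real_differentiable_def by metis
qed

lemma expanding_abs:
  fixes f :: "real \<Rightarrow> real"
  assumes "m > 0" and expanding: "\<And>a b. a \<le> b \<Longrightarrow> m * (b - a) \<le> f b - f a"
  shows "m * \<bar>a - b\<bar> \<le> \<bar>f a - f b\<bar>"
proof (cases "a \<le> b")
  case True
  then show ?thesis using expanding[of a b] \<open>m > 0\<close> by (simp add: abs_if mult_nonneg_nonneg)
next
  case False
  then show ?thesis using expanding[of b a] \<open>m > 0\<close> by (simp add: abs_if mult_nonneg_nonneg)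
qed

lemma bij_if_expanding:
  fixes f :: "real \<Rightarrow> real"
  assumes f: "continuous_on UNIV f" and "m > 0"
    and expanding: "\<And>a b. a \<le> b \<Longrightarrow> m * (b - a) \<le> f b - f a"
  shows "bij f"
proof (rule bijI)
  show "inj f"
  proof (rule injI)
    fix a b assume "f a = f b"
    then have "m * \<bar>a - b\<bar> \<le> 0" using expanding_abs[OF \<open>m > 0\<close> expanding, of a b] by simp
    then show "a = b" using \<open>m > 0\<close> by (simp add: mult_le_0_iff)
  qed
  show "surj f"
  proof (rule surjI)
    fix z
    define x where "x = (z - f 0) / m"
    have "m * (x - 0) = z - f 0" "0 \<le> x \<longleftrightarrow> f 0 \<le> z"
      using \<open>m > 0\<close> by (simp_all add: x_def zero_le_divide_iff)
    then have "z \<in> closed_segment (f 0) (f x)"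
      using expanding[of 0 x] expanding[of x 0] by (cases "0 \<le> x") (auto simp: closed_segment_eq_real_ivl)
    then obtain y where "f y = z"
      using IVT'_closed_segment_real[of z f 0 x] f by (auto intro: continuous_on_subset)
    then show "f (SOME y. f y = z) = z" by (rule someI)
  qed
qed

lemma inv_lipschitz_if_expanding:
  fixes f :: "real \<Rightarrow> real"
  assumes "surj f" "m > 0"
    and expanding: "\<And>a b. a \<le> b \<Longrightarrow> m * (b - a) \<le> f b - f a"
  shows "\<bar>inv f z - inv f w\<bar> \<le> \<bar>z - w\<bar> / m"
  using expanding_abs[OF \<open>m > 0\<close> expanding, of "inv f z" "inv f w"] \<open>m > 0\<close>
  by (simp add: surj_f_inv_f[OF \<open>surj f\<close>] field_simps)

lemma C2_inv:
  assumes "C2 f" "\<And>y. deriv f y \<noteq> 0" "surj f" "continuous_on UNIV (inv f)"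
  shows "C2 (inv f)"
proof -
  define g f' f'' where "g = inv f" and "f' = deriv f" and "f'' = deriv (deriv f)"
  have f': "(f has_real_derivative f' y) (at y)" and f'': "(f' has_real_derivative f'' y) (at y)" for y
    using \<open>C2 f\<close> unfolding C2_def f'_def f''_def by (auto simp: DERIV_deriv_iff_real_differentiable)
  have f'_cont: "continuous_on UNIV f'" and f''_cont: "continuous_on UNIV f''"
    using \<open>C2 f\<close> f'' unfolding C2_def f''_def
    by (auto intro!: continuous_at_imp_continuous_on DERIV_isCont)
  have g_cont: "continuous_on UNIV g" and f_g: "f (g z) = z" for z
    using assms(3,4) by (simp_all add: g_def surj_f_inv_f)
  have f'_nonzero: "f' y \<noteq> 0" for y
    using assms(2) by (simp add: f'_def)
  have g': "(g has_real_derivative inverse (f' (g z))) (at z)" for z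
    by (rule DERIV_inverse_function[of f "f' (g z)" g z "z - 1" "z + 1"])
      (use f' f'_nonzero f_g g_cont in \<open>auto simp: continuous_on_eq_continuous_at\<close>)
  have g'': "((\<lambda>z. inverse (f' (g z))) has_real_derivative
      - f'' (g z) / f' (g z) ^ 3) (at z)" for z
    using DERIV_inverse_fun[OF DERIV_chain2[OF f'' g'] f'_nonzero]
    by (simp add: field_simps power3_eq_cube f'_nonzero)
  have "continuous_on UNIV (\<lambda>z. - f'' (g z) / f' (g z) ^ 3)"
    using continuous_on_compose2[OF f''_cont g_cont] continuous_on_compose2[OF f'_cont g_cont] f'_nonzero
    by (auto intro!: continuous_intros)
  then show ?thesis
    unfolding g_def[symmetric] using g' g'' by (rule C2I[rotated 2])
qed

definition phi_y :: "(real \<Rightarrow> real \<Rightarrow> real) \<Rightarrow> real \<Rightarrow> real \<Rightarrow> real" where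
  "phi_y lam t y = exp (2 * oint 0 y (lam t))"

definition phi_t :: "(real \<Rightarrow> real \<Rightarrow> real) \<Rightarrow> (real \<Rightarrow> real \<Rightarrow> real) \<Rightarrow> real \<Rightarrow> real \<Rightarrow> real"
  where "phi_t lam lam_t t y = oint 0 y (\<lambda>s. 2 * oint 0 s (lam_t t) * phi_y lam t s)"

lemma phi_eq_oint_phi_y: "phi lam t = (\<lambda>y. oint 0 y (phi_y lam t))"
  by (simp add: fun_eq_iff phi_def phi_y_def[abs_def])

lemma phi_y_pos: "phi_y lam t y > 0"
  by (simp add: phi_y_def)

lemma phi_y_bounds:
  assumes "\<And>s. \<bar>oint 0 s (lam t)\<bar> \<le> C"
  shows "exp (- (2 * C)) \<le> phi_y lam t y" "phi_y lam t y \<le> exp (2 * C)"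
  using assms[of y] by (simp_all add: phi_y_def)

lemma has_real_derivative_phi_y:
  assumes "continuous_on UNIV (lam t)"
  shows "(phi_y lam t has_real_derivative 2 * lam t y * phi_y lam t y) (at y)"
  unfolding phi_y_def[abs_def]
  using DERIV_chain2[OF DERIV_exp DERIV_cmult[OF has_real_derivative_oint[OF assms]]]
  by (simp add: mult.commute)

lemma continuous_on_phi_y:
  "continuous_on UNIV (lam t) \<Longrightarrow> continuous_on UNIV (phi_y lam t)"
  unfolding phi_y_def[abs_def] by (intro continuous_intros continuous_on_oint)

lemma has_real_derivative_phi:
  "continuous_on UNIV (lam t) \<Longrightarrow> (phi lam t has_real_derivative phi_y lam t y) (at y)"
  unfolding phi_eq_oint_phi_y by (intro has_real_derivative_oint continuous_on_phi_y)

lemma deriv_phi: "continuous_on UNIV (lam t) \<Longrightarrow> deriv (phi lam t) = phi_y lam t"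
  using has_real_derivative_phi DERIV_imp_deriv by blast

lemma phi_ode:
  assumes "continuous_on UNIV (lam t)"
  shows "deriv (deriv (phi lam t)) y = 2 * lam t y * deriv (phi lam t) y"
  using has_real_derivative_phi_y[of lam t, OF assms]
  by (simp add: deriv_phi[of lam t, OF assms] DERIV_imp_deriv)

lemma C2_phi:
  assumes "continuous_on UNIV (lam t)"
  shows "C2 (phi lam t)"
  using has_real_derivative_phi[of lam t, OF assms] has_real_derivative_phi_y[of lam t, OF assms]
  by (rule C2I)
    (use assms continuous_on_phi_y[of lam t, OF assms] in \<open>auto intro!: continuous_intros\<close>)

lemma phi_diff:
  "continuous_on UNIV (lam t) \<Longrightarrow> phi lam t b - phi lam t a = oint a b (phi_y lam t)"
  using oint_combine[of "phi_y lam t" 0 a b]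
  by (simp add: phi_eq_oint_phi_y integrable_on_interval_if_continuous continuous_on_phi_y)

lemma phi_expanding:
  assumes "continuous_on UNIV (lam t)" "\<And>s. \<bar>oint 0 s (lam t)\<bar> \<le> C" "a \<le> b"
  shows "exp (- (2 * C)) * (b - a) \<le> phi lam t b - phi lam t a"
  unfolding phi_diff[of lam t, OF assms(1)]
  by (rule oint_ge[OF continuous_on_phi_y[of lam t, OF assms(1)]
        phi_y_bounds(1)[of lam t, OF assms(2)] assms(3)])

lemma phi_lipschitz:
  assumes "continuous_on UNIV (lam t)" "\<And>s. \<bar>oint 0 s (lam t)\<bar> \<le> C"
  shows "\<bar>phi lam t y - phi lam t ybar\<bar> \<le> exp (2 * C) * \<bar>y - ybar\<bar>"
  unfolding phi_diff[of lam t, OF assms(1)]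
  by (rule abs_oint_le[OF continuous_on_phi_y[of lam t, OF assms(1)]])
    (use phi_y_bounds(2)[of lam t, OF assms(2)] phi_y_pos in \<open>simp add: less_imp_le\<close>)

lemma bij_phi:
  assumes "continuous_on UNIV (lam t)" "\<And>s. \<bar>oint 0 s (lam t)\<bar> \<le> C"
  shows "bij (phi lam t)"
  using has_real_derivative_phi[of lam t, OF assms(1)] phi_expanding[of lam t, OF assms]
  by (intro bij_if_expanding[of _ "exp (- (2 * C))"])
    (auto intro: continuous_at_imp_continuous_on DERIV_isCont)

lemma inv_phi_lipschitz:
  assumes "continuous_on UNIV (lam t)" "\<And>s. \<bar>oint 0 s (lam t)\<bar> \<le> C"
  shows "\<bar>inv (phi lam t) y - inv (phi lam t) ybar\<bar> \<le> exp (2 * C) * \<bar>y - ybar\<bar>"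
  using inv_lipschitz_if_expanding[OF bij_is_surj[OF bij_phi[of lam t, OF assms]] _
      phi_expanding[of lam t, OF assms]]
  by (simp add: exp_minus divide_inverse mult.commute)

lemma C2_inv_phi:
  assumes "continuous_on UNIV (lam t)" "\<And>s. \<bar>oint 0 s (lam t)\<bar> \<le> C"
  shows "C2 (inv (phi lam t))"
proof (rule C2_inv[OF C2_phi[of lam t, OF assms(1)]])
  show "deriv (phi lam t) y \<noteq> 0" for y
    using phi_y_pos[of lam t y] by (simp add: deriv_phi[of lam t, OF assms(1)])
  show "surj (phi lam t)"
    using bij_phi[of lam t, OF assms] by (rule bij_is_surj)
  show "continuous_on UNIV (inv (phi lam t))"
    by (rule lipschitz_on_continuous_on[where L = "exp (2 * C)"], rule lipschitz_onI)
      (use inv_phi_lipschitz[of lam t, OF assms] in \<open>auto simp: dist_real_def\<close>)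
qed

lemma continuous_on_phi_y_param:
  assumes "continuous_on (U \<times> UNIV) (\<lambda>(t, y). lam t y)"
  shows "continuous_on (U \<times> UNIV) (\<lambda>(t, y). phi_y lam t y)"
proof -
  have "continuous_on (U \<times> UNIV) (\<lambda>p. oint 0 (snd p) (lam (fst p)))"
    using continuous_on_oint_param[OF assms] by (simp add: case_prod_beta')
  then show ?thesis
    unfolding phi_y_def case_prod_beta' by (intro continuous_intros)
qed

lemma continuous_on_phi_ty:
  assumes "continuous_on (U \<times> UNIV) (\<lambda>(t, y). lam t y)"
    and "continuous_on (U \<times> UNIV) (\<lambda>(t, y). lam_t t y)"
  shows "continuous_on (U \<times> UNIV) (\<lambda>(t, s). 2 * oint 0 s (lam_t t) * phi_y lam t s)"
proof -
  have "continuous_on (U \<times> UNIV) (\<lambda>p. oint 0 (snd p) (lam_t (fst p)))"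
    and "continuous_on (U \<times> UNIV) (\<lambda>p. phi_y lam (fst p) (snd p))"
    using continuous_on_oint_param[OF assms(2)] continuous_on_phi_y_param[OF assms(1)]
    by (simp_all add: case_prod_beta')
  then show ?thesis
    unfolding case_prod_beta' by (intro continuous_intros)
qed

lemma has_real_derivative_phi_y_param:
  assumes "convex U"
    and "\<And>t y. t \<in> U \<Longrightarrow> ((\<lambda>s. lam s y) has_real_derivative lam_t t y) (at t within U)"
    and "continuous_on (U \<times> UNIV) (\<lambda>(t, y). lam t y)"
    and "continuous_on (U \<times> UNIV) (\<lambda>(t, y). lam_t t y)"
    and "t \<in> U"
  shows "((\<lambda>t. phi_y lam t s) has_real_derivative 2 * oint 0 s (lam_t t) * phi_y lam t s)
    (at t within U)"
  unfolding phi_y_def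
  using DERIV_chain2[OF DERIV_exp DERIV_cmult[OF has_real_derivative_oint_param[OF assms]]]
  by (simp add: mult.commute)

lemma has_real_derivative_phi_param:
  assumes "convex U"
    and "\<And>t y. t \<in> U \<Longrightarrow> ((\<lambda>s. lam s y) has_real_derivative lam_t t y) (at t within U)"
    and "continuous_on (U \<times> UNIV) (\<lambda>(t, y). lam t y)"
    and "continuous_on (U \<times> UNIV) (\<lambda>(t, y). lam_t t y)"
    and "t \<in> U"
  shows "((\<lambda>t. phi lam t y) has_real_derivative phi_t lam lam_t t y) (at t within U)"
  unfolding phi_eq_oint_phi_y phi_t_def
  by (rule has_real_derivative_oint_param[OF assms(1) has_real_derivative_phi_y_param[OF assms(1-4)]
        continuous_on_phi_y_param[OF assms(3)] continuous_on_phi_ty[OF assms(3,4)] assms(5)])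

lemma continuous_on_phi_t:
  assumes "continuous_on (U \<times> UNIV) (\<lambda>(t, y). lam t y)"
    and "continuous_on (U \<times> UNIV) (\<lambda>(t, y). lam_t t y)"
  shows "continuous_on U (\<lambda>t. phi_t lam lam_t t y)"
  using continuous_on_section_snd[OF continuous_on_oint_param[OF continuous_on_phi_ty[OF assms]]]
  by (simp add: phi_t_def)

lemma phi_t_lipschitz:
  assumes lam_cont: "continuous_on UNIV (lam t)" and lam_t_cont: "continuous_on UNIV (lam_t t)"
    and "\<And>s. \<bar>oint 0 s (lam t)\<bar> \<le> C" and "\<And>s. \<bar>oint 0 s (lam_t t)\<bar> \<le> C_t"
  shows "\<bar>phi_t lam lam_t t y - phi_t lam lam_t t ybar\<bar> \<le> 2 * C_t * exp (2 * C) * \<bar>y - ybar\<bar>"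
proof -
  define h where "h s = 2 * oint 0 s (lam_t t) * phi_y lam t s" for s
  have h_cont: "continuous_on UNIV h"
    unfolding h_def
    using continuous_on_oint[OF lam_t_cont] continuous_on_phi_y[of lam t, OF lam_cont]
    by (intro continuous_intros)
  have "\<bar>h s\<bar> \<le> 2 * C_t * exp (2 * C)" for s
    unfolding h_def abs_mult
    using assms(4)[of s] phi_y_bounds(2)[of lam t, OF assms(3)] phi_y_pos[of lam t s]
    by (intro mult_mono) auto
  moreover have "phi_t lam lam_t t y - phi_t lam lam_t t ybar = oint ybar y h"
    using oint_combine[of h 0 ybar y] integrable_on_interval_if_continuous[OF h_cont]
    by (simp add: phi_t_def h_def[abs_def])
  ultimately show ?thesis
    using abs_oint_le[OF h_cont] by simp
qed

theorem lemma5p1: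
  fixes T :: real and lam lam_t :: "real \<Rightarrow> real \<Rightarrow> real"
  assumes T_pos: "T > 0"
    and lam_cont: "continuous_on ({0..T} \<times> UNIV) (\<lambda>(t, y). lam t y)"
    and lam_L1: "integrable lborel (\<lambda>y. SUP t\<in>{0..T}. \<bar>lam t y\<bar>)"
    and lam_t_deriv: "\<And>t y. t \<in> {0..T} \<Longrightarrow>
          ((\<lambda>s. lam s y) has_real_derivative lam_t t y) (at t within {0..T})"
    and lam_t_cont: "continuous_on ({0..T} \<times> UNIV) (\<lambda>(t, y). lam_t t y)"
    and lam_t_L1: "integrable lborel (\<lambda>y. SUP t\<in>{0..T}. \<bar>lam_t t y\<bar>)"
  shows
    "(\<forall>t\<in>{0..T}. \<forall>y. phi lam t differentiable at y \<and> deriv (phi lam t) differentiable at y \<and>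
        deriv (deriv (phi lam t)) y - 2 * lam t y * deriv (phi lam t) y = 0)
   \<and> (\<forall>t\<in>{0..T}. bij (phi lam t) \<and> C2 (phi lam t) \<and> C2 (inv (phi lam t)))
   \<and> (\<exists>L. \<forall>t\<in>{0..T}. \<forall>y ybar.
        \<bar>phi lam t y - phi lam t ybar\<bar> \<le> L * \<bar>y - ybar\<bar> \<and>
        \<bar>inv (phi lam t) y - inv (phi lam t) ybar\<bar> \<le> L * \<bar>y - ybar\<bar>)
   \<and> (\<forall>t\<in>{0..T}. \<forall>y. deriv (phi lam t) y > 0)
   \<and> (\<exists>B. \<forall>t\<in>{0..T}. \<forall>y. deriv (phi lam t) y \<le> B)
   \<and> (\<exists>phi_t :: real \<Rightarrow> real \<Rightarrow> real.
        (\<forall>t\<in>{0..T}. \<forall>y. ((\<lambda>s. phi lam s y) has_real_derivative phi_t t y) (at t within {0..T}))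
      \<and> (\<forall>y. continuous_on {0..T} (\<lambda>t. phi_t t y))
      \<and> (\<exists>K. \<forall>t\<in>{0..T}. \<forall>y ybar. \<bar>phi_t t y - phi_t t ybar\<bar> \<le> K * \<bar>y - ybar\<bar>))"
proof -
  define C C_t
    where "C = integral UNIV (\<lambda>y. SUP t\<in>{0..T}. \<bar>lam t y\<bar>)"
      and "C_t = integral UNIV (\<lambda>y. SUP t\<in>{0..T}. \<bar>lam_t t y\<bar>)"
  have cont: "continuous_on UNIV (lam t)" and cont_t: "continuous_on UNIV (lam_t t)"
    and bound: "\<And>s. \<bar>oint 0 s (lam t)\<bar> \<le> C" and bound_t: "\<And>s. \<bar>oint 0 s (lam_t t)\<bar> \<le> C_t"
    if "t \<in> {0..T}" for t
    using continuous_on_section_fst[OF lam_cont that] continuous_on_section_fst[OF lam_t_cont that]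
      abs_oint_le_integral_SUP[OF lam_cont compact_Icc lam_L1 that]
      abs_oint_le_integral_SUP[OF lam_t_cont compact_Icc lam_t_L1 that]
    by (simp_all add: C_def C_t_def)
  have "C2 (phi lam t) \<and> deriv (deriv (phi lam t)) y - 2 * lam t y * deriv (phi lam t) y = 0
      \<and> bij (phi lam t) \<and> C2 (inv (phi lam t))
      \<and> \<bar>phi lam t y - phi lam t ybar\<bar> \<le> exp (2 * C) * \<bar>y - ybar\<bar>
      \<and> \<bar>inv (phi lam t) y - inv (phi lam t) ybar\<bar> \<le> exp (2 * C) * \<bar>y - ybar\<bar>
      \<and> 0 < deriv (phi lam t) y \<and> deriv (phi lam t) y \<le> exp (2 * C)
      \<and> ((\<lambda>s. phi lam s y) has_real_derivative phi_t lam lam_t t y) (at t within {0..T})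
      \<and> \<bar>phi_t lam lam_t t y - phi_t lam lam_t t ybar\<bar> \<le> 2 * C_t * exp (2 * C) * \<bar>y - ybar\<bar>"
    if "t \<in> {0..T}" for t y ybar
    using C2_phi[of lam t, OF cont] phi_ode[of lam t, OF cont] bij_phi[of lam t, OF cont bound]
      C2_inv_phi[of lam t, OF cont bound] phi_lipschitz[of lam t, OF cont bound]
      inv_phi_lipschitz[of lam t, OF cont bound] deriv_phi[of lam t, OF cont] phi_y_pos
      phi_y_bounds(2)[of lam t, OF bound]
      has_real_derivative_phi_param[OF convex_real_interval(5) lam_t_deriv lam_cont lam_t_cont that]
      phi_t_lipschitz[of lam t, OF cont cont_t bound bound_t] that
    by simp
  then show ?thesis
    using continuous_on_phi_t[OF lam_cont lam_t_cont] unfolding C2_def by blast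
qed

end
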